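(* Let $n\ge 3$. The spectral radius of the power graph $P(G(n))$ of the gyrogroup $G(n)$ (defined in the context) satisfies $$\lambda_1(P(\mathbb{Z}_{2^{n-1}}))<\lambda_1(P(G(n)))\le \lambda_1(P(\mathbb{Z}_{2^{n-1}}))+\sqrt{2^{n-1}},$$ where $P(\mathbb{Z}_{2^{n-1}})$ is the power graph of the cyclic group of order $2^{n-1}$.
   Context: Let $n\ge 3$ be an integer and $m=2^{n-1}$. Let $P(n)=\{0,1,\dots,m-1\}$, $H(n)=\{m,m+1,\dots,2^n-1\}$ and $G(n)=P(n)\cup H(n)$. For $i,j\in G(n)$ let $t,s,k\in P(n)$ be the residues modulo $m$ (taken in $\{0,\dots,m-1\}$) of $i+j$, $i+(\frac m2-1)j$ and $(\frac m2+1)i+(\frac m2-1)j$, respectively, and define $i\oplus j=t$ if $i,j\in P(n)$; $i\oplus j=t+m$ if $i\in P(n),j\in H(n)$; $i\oplus j=s+m$ if $i\in H(n),j\in P(n)$; $i\oplus j=k$ if $i,j\in H(n)$. Then $(G(n),\oplus)$ is a gyrogroup with identity $e=0$. Powers are defined by $a^1=a$, $a^{k+1}=a^k\oplus a$ (in a group, the usual powers). The power graph $P(X)$ of $X$ (a group or $G(n)$) is the simple undirected graph with vertex set $X$ in which distinct vertices $u,v$ are adjacent if and only if $u^k=v$ or $v^k=u$ for some positive integer $k$. For a graph $\Gamma$, $\lambda_1(\Gamma)$ denotes the largest eigenvalue of its adjacency matrix (spectral radius). *)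

theory Defs
  imports "Jordan_Normal_Form.Char_Poly"
begin

text \<open>Gyrogroup G(n) on carrier {0..<2^n}; P(n) = {0..<m}, H(n) = {m..<2m}, m = 2^(n-1).\<close>
definition gyro_op :: "nat \<Rightarrow> nat \<Rightarrow> nat \<Rightarrow> nat" where
  "gyro_op n i j = (let m = 2 ^ (n - 1);
       t = (i + j) mod m;
       s = (i + (m div 2 - 1) * j) mod m;
       k = ((m div 2 + 1) * i + (m div 2 - 1) * j) mod m
     in if i < m \<and> j < m then t
        else if i < m \<and> m \<le> j then t + m
        else if m \<le> i \<and> j < m then s + m
        else k)"

definition cyc_op :: "nat \<Rightarrow> nat \<Rightarrow> nat \<Rightarrow> nat" where
  "cyc_op m i j = (i + j) mod m"

text \<open>gpow f a k = a^(k+1), with a^1 = a and a^(k+1) = a^k (op) a.\<close>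
primrec gpow :: "(nat \<Rightarrow> nat \<Rightarrow> nat) \<Rightarrow> nat \<Rightarrow> nat \<Rightarrow> nat" where
  "gpow f a 0 = a"
| "gpow f a (Suc k) = f (gpow f a k) a"

definition power_adj :: "(nat \<Rightarrow> nat \<Rightarrow> nat) \<Rightarrow> nat \<Rightarrow> nat \<Rightarrow> bool" where
  "power_adj f u v \<longleftrightarrow> u \<noteq> v \<and> (\<exists>k. gpow f u k = v \<or> gpow f v k = u)"

definition power_graph_adj_mat :: "nat \<Rightarrow> (nat \<Rightarrow> nat \<Rightarrow> nat) \<Rightarrow> real mat" where
  "power_graph_adj_mat N f = mat N N (\<lambda>(i, j). if power_adj f i j then 1 else 0)"

text \<open>Largest eigenvalue of a real matrix (adjacency matrices are symmetric, so all eigenvalues are real).\<close>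
definition lambda1 :: "real mat \<Rightarrow> real" where
  "lambda1 A = Max {x. eigenvalue A x}"

end

(*
  The power graph of Z_m, m = 2^(n-1), is the complete graph K_m: the subgroups of a cyclic
  p-group form a chain, so of two elements one is always a multiple of the other. Hence its
  spectral radius is m - 1.

  In G(n), the half P(n) multiplies like Z_m, while every h in H(n) satisfies h \<oplus> h = 0 and
  0 \<oplus> h = h, so the only powers of h are h and 0. Thus the power graph of G(n) is K_m on P(n)
  with one pendant vertex attached to 0 for each element of H(n). Eliminating the eigenvector
  equations of this graph shows that every eigenvalue x > m - 2 is a root of the cubic
  (x + 2 - m) (x^2 - m) - (m - 1) x, which is negative at m - 1 and positive beyond m.
  So the spectral radius lies in (m - 1, m], and m <= m - 1 + sqrt m.
*)
theory Submission
  imports Defs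
begin

definition complete_graph_mat :: "nat \<Rightarrow> real mat" where
  "complete_graph_mat m = mat m m (\<lambda>(i, j). if i \<noteq> j then 1 else 0)"

definition pendant_clique_mat :: "nat \<Rightarrow> real mat" where
  "pendant_clique_mat m = mat (2 * m) (2 * m) (\<lambda>(i, j).
     if i \<noteq> j \<and> (i < m \<and> j < m \<or> i = 0 \<and> m \<le> j \<or> j = 0 \<and> m \<le> i)
     then 1 else 0)"

lemma power_adj_sym: "power_adj f u v \<longleftrightarrow> power_adj f v u"
  unfolding power_adj_def by blast

lemma gpow_eq_mult_mod:
  assumes "u < m" and "\<And>x. x < m \<Longrightarrow> f x u = (x + u) mod m"
  shows "gpow f u k = Suc k * u mod m"
proof (induction k)
  case 0
  show ?case using assms(1) by simp
next
  case (Suc k)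
  have "gpow f u (Suc k) = (Suc k * u mod m + u) mod m"
    using Suc assms by (simp add: mod_less_divisor)
  also have "\<dots> = Suc (Suc k) * u mod m"
    by (simp only: mod_add_left_eq) (simp add: algebra_simps)
  finally show ?case .
qed

lemma gpow_cyc_op: "u < m \<Longrightarrow> gpow (cyc_op m) u k = Suc k * u mod m"
  by (rule gpow_eq_mult_mod) (simp_all add: cyc_op_def)

lemma gpow_gyro_op_low:
  "u < 2 ^ (n - 1) \<Longrightarrow> gpow (gyro_op n) u k = Suc k * u mod 2 ^ (n - 1)"
  by (rule gpow_eq_mult_mod) (simp_all add: gyro_op_def Let_def)

lemma gpow_gyro_op_high:
  assumes "n \<ge> 1" and "2 ^ (n - 1) \<le> u" and "u < 2 ^ n"
  shows "gpow (gyro_op n) u k = (if even k then u else 0)"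
proof -
  define m :: nat where "m = 2 ^ (n - 1)"
  have u: "m \<le> u" "u < 2 * m"
    using assms by (simp_all add: m_def power_eq_if[of 2 n] split: if_splits)
  have "m div 2 + 1 + (m div 2 - 1) = m"
  proof (cases "n = 1")
    case False
    then have "m = 2 * 2 ^ (n - 2)"
      using \<open>n \<ge> 1\<close> by (simp add: m_def flip: power_Suc)
    then show ?thesis by simp
  qed (simp add: m_def)
  then have "(m div 2 + 1) * u + (m div 2 - 1) * u = m * u"
    by (metis add_mult_distrib)
  then have square: "gyro_op n u u = 0"
    using u unfolding gyro_op_def Let_def m_def[symmetric] by auto
  have "gyro_op n 0 u = u"
    using u unfolding gyro_op_def Let_def m_def[symmetric] by (simp add: le_mod_geq)
  then show ?thesis
    using square by (induction k) auto
qed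

lemma mult_mod_eq_if_gcd_dvd:
  fixes m u v :: nat
  assumes "v < m" and "gcd u m dvd v"
  shows "\<exists>k. Suc k * u mod m = v"
proof (cases "u = 0")
  case True
  then show ?thesis using assms by (auto dest: dvd_imp_le)
next
  case False
  obtain x y where xy: "u * x = m * y + gcd u m"
    using bezout_nat[OF False] by blast
  obtain c where c: "v = gcd u m * c"
    using assms(2) by blast
  have "(x * c + m) * u = m * (y * c + u) + v"
    using xy c by (simp add: algebra_simps)
  then have "(x * c + m) * u mod m = v"
    using assms(1) by simp
  moreover have "x * c + m = Suc (x * c + m - 1)"
    using assms(1) by simp
  ultimately show ?thesis by metis
qed

lemma mult_mod_prime_power_chain:
  fixes p e u v :: nat
  assumes "prime p" and "u < p ^ e" and "v < p ^ e"
  shows "\<exists>k. Suc k * u mod p ^ e = v \<or> Suc k * v mod p ^ e = u"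
proof -
  obtain a b where a: "gcd u (p ^ e) = p ^ a" and b: "gcd v (p ^ e) = p ^ b"
    using divides_primepow_nat[OF assms(1)] by (meson gcd_dvd2)
  show ?thesis
  proof (cases "a \<le> b")
    case True
    then have "gcd u (p ^ e) dvd v"
      using a b by (metis dvd_trans gcd_dvd1 le_imp_power_dvd)
    then show ?thesis using mult_mod_eq_if_gcd_dvd[OF assms(3)] by blast
  next
    case False
    then have "gcd v (p ^ e) dvd u"
      using a b by (metis dvd_trans gcd_dvd1 le_imp_power_dvd nat_le_linear)
    then show ?thesis using mult_mod_eq_if_gcd_dvd[OF assms(2)] by blast
  qed
qed

lemma power_adj_cyc_op_prime_power:
  assumes "prime p" and "u < p ^ e" and "v < p ^ e"
  shows "power_adj (cyc_op (p ^ e)) u v \<longleftrightarrow> u \<noteq> v"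
  using mult_mod_prime_power_chain[OF assms] gpow_cyc_op assms(2,3)
  unfolding power_adj_def by metis

lemma power_graph_cyc_op_prime_power:
  assumes "prime p"
  shows "power_graph_adj_mat (p ^ e) (cyc_op (p ^ e)) = complete_graph_mat (p ^ e)"
  unfolding power_graph_adj_mat_def complete_graph_mat_def
  using power_adj_cyc_op_prime_power[OF assms] by (intro cong_mat) auto

lemma power_adj_gyro_op_low_high:
  assumes "n \<ge> 1" and "u < 2 ^ (n - 1)" and "2 ^ (n - 1) \<le> v" and "v < 2 ^ n"
  shows "power_adj (gyro_op n) u v \<longleftrightarrow> u = 0"
proof -
  have "gpow (gyro_op n) u k \<noteq> v" for k
    using gpow_gyro_op_low[OF assms(2)] assms(3)
    by (metis leD le_less_trans mod_less_divisor pos2 zero_less_power)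
  moreover have "gpow (gyro_op n) v k = u \<longleftrightarrow> odd k \<and> u = 0" for k
    using gpow_gyro_op_high[OF assms(1,3,4)] assms(2,3) by auto
  ultimately show ?thesis
    using assms(2,3) unfolding power_adj_def by (metis odd_one)
qed

lemma not_power_adj_gyro_op_high_high:
  assumes "n \<ge> 1" and "2 ^ (n - 1) \<le> u" "u < 2 ^ n" and "2 ^ (n - 1) \<le> v" "v < 2 ^ n"
  shows "\<not> power_adj (gyro_op n) u v"
  using gpow_gyro_op_high[OF assms(1,2,3)] gpow_gyro_op_high[OF assms(1,4,5)] assms(2,4)
  unfolding power_adj_def by (metis not_less_zero pos2 zero_less_power le_zero_eq)

lemma power_adj_gyro_op:
  assumes "n \<ge> 1" and "u < 2 ^ n" and "v < 2 ^ n"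
  shows "power_adj (gyro_op n) u v \<longleftrightarrow> u \<noteq> v \<and>
    (u < 2 ^ (n - 1) \<and> v < 2 ^ (n - 1) \<or>
     u = 0 \<and> 2 ^ (n - 1) \<le> v \<or> v = 0 \<and> 2 ^ (n - 1) \<le> u)"
proof (cases "u < 2 ^ (n - 1)"; cases "v < 2 ^ (n - 1)")
  assume "u < 2 ^ (n - 1)" "v < 2 ^ (n - 1)"
  then show ?thesis
    using mult_mod_prime_power_chain[OF two_is_prime_nat] gpow_gyro_op_low
    unfolding power_adj_def by metis
next
  assume "u < 2 ^ (n - 1)" "\<not> v < 2 ^ (n - 1)"
  then show ?thesis
    using power_adj_gyro_op_low_high assms by auto
next
  assume "\<not> u < 2 ^ (n - 1)" "v < 2 ^ (n - 1)"
  then show ?thesis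
    using power_adj_gyro_op_low_high[of n v u] power_adj_sym assms by auto
next
  assume "\<not> u < 2 ^ (n - 1)" "\<not> v < 2 ^ (n - 1)"
  moreover from this have "u \<noteq> 0" "v \<noteq> 0"
    by (metis not_gr_zero pos2 zero_less_power)+
  ultimately show ?thesis
    using not_power_adj_gyro_op_high_high assms by auto
qed

lemma power_graph_gyro_op:
  assumes "n \<ge> 1"
  shows "power_graph_adj_mat (2 ^ n) (gyro_op n) = pendant_clique_mat (2 ^ (n - 1))"
proof -
  have "(2::nat) ^ n = 2 * 2 ^ (n - 1)"
    using assms by (simp flip: power_Suc)
  then show ?thesis
    unfolding power_graph_adj_mat_def pendant_clique_mat_def
    using power_adj_gyro_op[OF assms] by (intro cong_mat) auto
qed

lemma finite_eigenvalues:
  fixes A :: "real mat"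
  assumes "A \<in> carrier_mat N N"
  shows "finite {x. eigenvalue A x}"
proof -
  have "char_poly A \<noteq> 0"
    using degree_monic_char_poly[OF assms] by auto
  then have "finite {x. poly (char_poly A) x = 0}"
    by (rule poly_roots_finite)
  then show ?thesis
    using eigenvalue_root_char_poly[OF assms] by simp
qed

lemma eigenvalue_le_lambda1:
  assumes "A \<in> carrier_mat N N" and "eigenvalue A x"
  shows "x \<le> lambda1 A"
  unfolding lambda1_def using finite_eigenvalues[OF assms(1)] assms(2) by (intro Max_ge) auto

lemma eigenvalue_lambda1:
  assumes "A \<in> carrier_mat N N" and "eigenvalue A x"
  shows "eigenvalue A (lambda1 A)"
proof -
  have "lambda1 A \<in> {x. eigenvalue A x}"
    unfolding lambda1_def using finite_eigenvalues[OF assms(1)] assms(2) by (intro Max_in) auto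
  then show ?thesis by simp
qed

lemma eigenvalueE:
  assumes "A \<in> carrier_mat N N" and "eigenvalue A x"
  obtains v i where "dim_vec v = N" and "i < N" and "v $ i \<noteq> 0"
    and "\<And>j. j < N \<Longrightarrow> (A *\<^sub>v v) $ j = x * v $ j"
proof -
  obtain v where v: "v \<in> carrier_vec N" "v \<noteq> 0\<^sub>v N" "A *\<^sub>v v = x \<cdot>\<^sub>v v"
    using assms unfolding eigenvalue_def eigenvector_def by auto
  have "\<exists>i<N. v $ i \<noteq> 0"
  proof (rule ccontr)
    assume "\<not> ?thesis"
    then have "v = 0\<^sub>v N"
      using v(1) by (intro eq_vecI) auto
    then show False using v(2) by simp
  qed
  then obtain i where "i < N" "v $ i \<noteq> 0"
    by blast
  moreover have "(A *\<^sub>v v) $ j = x * v $ j" if "j < N" for j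
    using v(1,3) that by simp
  ultimately show ?thesis
    using v(1) by (intro that[of v i]) auto
qed

lemma complete_graph_mat_carrier: "complete_graph_mat m \<in> carrier_mat m m"
  by (simp add: complete_graph_mat_def)

lemma complete_graph_mat_mult_vec:
  assumes "i < m" and "dim_vec v = m"
  shows "(complete_graph_mat m *\<^sub>v v) $ i = (\<Sum>j = 0..<m. v $ j) - v $ i"
proof -
  have "(complete_graph_mat m *\<^sub>v v) $ i = (\<Sum>j = 0..<m. (if i \<noteq> j then 1 else 0) * v $ j)"
    using assms by (simp add: complete_graph_mat_def scalar_prod_def)
  also have "\<dots> = (\<Sum>j = 0..<m. v $ j - (if j = i then v $ j else 0))"
    by (intro sum.cong) auto
  finally show ?thesis
    using assms(1) by (simp add: sum_subtractf)
qed

lemma eigenvalue_complete_graph_matD: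
  assumes "eigenvalue (complete_graph_mat m) x"
  shows "x = real m - 1 \<or> x = -1"
proof -
  obtain v i where v: "dim_vec v = m" "i < m" "v $ i \<noteq> 0"
    and eq: "\<And>j. j < m \<Longrightarrow> (complete_graph_mat m *\<^sub>v v) $ j = x * v $ j"
    using eigenvalueE[OF complete_graph_mat_carrier assms] by blast
  define S where "S = (\<Sum>j = 0..<m. v $ j)"
  have row: "(x + 1) * v $ j = S" if "j < m" for j
    using eq[OF that] complete_graph_mat_mult_vec[OF that v(1)]
    by (simp add: S_def algebra_simps)
  have "(x + 1) * S = (\<Sum>j = 0..<m. (x + 1) * v $ j)"
    by (simp add: S_def sum_distrib_left)
  also have "\<dots> = real m * S"
    using row by simp
  finally have "(x + 1 - real m) * S = 0"
    by (simp add: algebra_simps)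
  moreover have "S = 0 \<Longrightarrow> x + 1 = 0"
    using row[OF v(2)] v(3) by simp
  ultimately show ?thesis
    by auto
qed

lemma complete_graph_mat_degree_eigenvalue:
  assumes "m \<ge> 1"
  shows "eigenvalue (complete_graph_mat m) (real m - 1)"
proof -
  let ?ones = "vec m (\<lambda>_. 1) :: real vec"
  have "complete_graph_mat m *\<^sub>v ?ones = (real m - 1) \<cdot>\<^sub>v ?ones"
  proof (rule eq_vecI)
    show "dim_vec (complete_graph_mat m *\<^sub>v ?ones) = dim_vec ((real m - 1) \<cdot>\<^sub>v ?ones)"
      by (simp add: complete_graph_mat_def)
  qed (simp add: complete_graph_mat_mult_vec)
  moreover have "?ones $ 0 \<noteq> 0\<^sub>v m $ 0"
    using assms by simp
  then have "?ones \<noteq> 0\<^sub>v m"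
    by metis
  ultimately show ?thesis
    unfolding eigenvalue_def eigenvector_def
    by (intro exI[of _ ?ones]) (simp add: complete_graph_mat_def)
qed

lemma lambda1_complete_graph_mat:
  assumes "m \<ge> 1"
  shows "lambda1 (complete_graph_mat m) = real m - 1"
proof (rule antisym)
  note ev = complete_graph_mat_degree_eigenvalue[OF assms]
  have "eigenvalue (complete_graph_mat m) (lambda1 (complete_graph_mat m))"
    by (rule eigenvalue_lambda1[OF complete_graph_mat_carrier ev])
  then show "lambda1 (complete_graph_mat m) \<le> real m - 1"
    using eigenvalue_complete_graph_matD assms by fastforce
  show "real m - 1 \<le> lambda1 (complete_graph_mat m)"
    by (rule eigenvalue_le_lambda1[OF complete_graph_mat_carrier ev])
qed

lemma pendant_clique_mat_carrier: "pendant_clique_mat m \<in> carrier_mat (2 * m) (2 * m)"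
  by (simp add: pendant_clique_mat_def)

lemma pendant_clique_mat_mult_vec:
  assumes "i < 2 * m" and "dim_vec v = 2 * m"
  shows "(pendant_clique_mat m *\<^sub>v v) $ i =
    (if i = 0 then (\<Sum>j = 0..<m. v $ j) - v $ 0 + (\<Sum>j = m..<2 * m. v $ j)
     else if i < m then (\<Sum>j = 0..<m. v $ j) - v $ i
     else v $ 0)" (is "_ = ?rhs")
proof -
  define f where "f j =
    (if i \<noteq> j \<and> (i < m \<and> j < m \<or> i = 0 \<and> m \<le> j \<or> j = 0 \<and> m \<le> i) then v $ j else 0)"
    for j
  have "(pendant_clique_mat m *\<^sub>v v) $ i = (\<Sum>j = 0..<2 * m. f j)"
    using assms by (auto simp: pendant_clique_mat_def scalar_prod_def f_def intro!: sum.cong)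
  also have "\<dots> = (\<Sum>j = 0..<m. f j) + (\<Sum>j = m..<2 * m. f j)"
    by (simp add: sum.atLeastLessThan_concat)
  also have "\<dots> = ?rhs"
  proof (cases "i < m")
    case True
    have "(\<Sum>j = 0..<m. f j) = (\<Sum>j = 0..<m. v $ j - (if j = i then v $ j else 0))"
      using True by (intro sum.cong) (auto simp: f_def)
    moreover have "(\<Sum>j = m..<2 * m. f j) = (\<Sum>j = m..<2 * m. if i = 0 then v $ j else 0)"
      using True by (intro sum.cong) (auto simp: f_def)
    ultimately show ?thesis
      using True by (simp add: sum_subtractf)
  next
    case False
    have "(\<Sum>j = 0..<m. f j) = (\<Sum>j = 0..<m. if j = 0 then v $ 0 else 0)"
      using False by (intro sum.cong) (auto simp: f_def)
    moreover have "(\<Sum>j = m..<2 * m. f j) = 0"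
      using False by (intro sum.neutral) (auto simp: f_def)
    ultimately show ?thesis
      using False assms(1) by auto
  qed
  finally show ?thesis .
qed

definition pendant_cubic :: "real \<Rightarrow> real \<Rightarrow> real" where
  "pendant_cubic m x = (x + 2 - m) * (x\<^sup>2 - m) - (m - 1) * x"

lemma pendant_cubic_pos:
  assumes "m \<ge> 1" and "x > m"
  shows "pendant_cubic m x > 0"
proof -
  have "x * x \<ge> m * 1" and "m * m \<ge> m * 1"
    using assms by (intro mult_mono; simp)+
  then have "(x + 2 - m) * (x\<^sup>2 - m) \<ge> 2 * (x\<^sup>2 - m)"
    using assms by (intro mult_right_mono) (auto simp: power2_eq_square)
  moreover have "m * (m + 1) < x * (2 * x - m + 1)"
    using assms by (intro mult_strict_mono) auto
  ultimately show ?thesis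
    using \<open>m * m \<ge> m * 1\<close>
    unfolding pendant_cubic_def by (simp add: power2_eq_square algebra_simps)
qed

lemma pendant_cubic_root_exists:
  assumes "m \<ge> 1"
  obtains \<mu> where "m - 1 < \<mu>" and "\<mu> \<le> m" and "pendant_cubic m \<mu> = 0"
proof -
  have "pendant_cubic m (m - 1) = - m"
    by (simp add: pendant_cubic_def power2_eq_square algebra_simps)
  moreover have "pendant_cubic m m = m * (m - 1)"
    by (simp add: pendant_cubic_def power2_eq_square algebra_simps)
  moreover have "continuous_on {m - 1..m} (pendant_cubic m)"
    unfolding pendant_cubic_def by (intro continuous_intros)
  ultimately obtain \<mu> where "m - 1 \<le> \<mu>" "\<mu> \<le> m" "pendant_cubic m \<mu> = 0"
    using IVT'[of "pendant_cubic m" "m - 1" 0 m] assms by auto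
  moreover have "\<mu> \<noteq> m - 1"
    using calculation \<open>pendant_cubic m (m - 1) = - m\<close> assms by auto
  ultimately show ?thesis
    by (intro that[of \<mu>]) auto
qed

lemma eigenvalue_pendant_clique_mat_imp_root:
  assumes "m \<ge> 2" and "real m - 2 < x" and "eigenvalue (pendant_clique_mat m) x"
  shows "pendant_cubic m x = 0"
proof -
  obtain v i where v: "dim_vec v = 2 * m" "i < 2 * m" "v $ i \<noteq> 0"
    and eq: "\<And>j. j < 2 * m \<Longrightarrow> (pendant_clique_mat m *\<^sub>v v) $ j = x * v $ j"
    using eigenvalueE[OF pendant_clique_mat_carrier assms(3)] by blast
  define a S T where "a = v $ 0"
    and "S = (\<Sum>j = 0..<m. v $ j)" and "T = (\<Sum>j = m..<2 * m. v $ j)"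
  have row: "(pendant_clique_mat m *\<^sub>v v) $ j =
    (if j = 0 then S - a + T else if j < m then S - v $ j else a)" if "j < 2 * m" for j
    using pendant_clique_mat_mult_vec[OF that v(1)] by (simp add: a_def S_def T_def)
  have x_pos: "x > 0" "x + 2 - m > 0"
    using assms(1,2) by auto
  have row_0: "S - a + T = x * a"
    using row[of 0] eq[of 0] assms(1) by (simp add: a_def)
  have row_low: "(x + 1) * v $ j = S" if "0 < j" "j < m" for j
    using row[of j] eq[of j] that by (simp add: algebra_simps)
  have row_high: "x * v $ j = a" if "m \<le> j" "j < 2 * m" for j
    using row[of j] eq[of j] that by simp
  have "(x + 1) * S = (x + 1) * a + (\<Sum>j = Suc 0..<m. (x + 1) * v $ j)"
    using assms(1)
    by (simp add: S_def a_def sum.atLeast_Suc_lessThan sum_distrib_left algebra_simps)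
  also have "\<dots> = (x + 1) * a + (real m - 1) * S"
    using row_low assms(1) by (simp add: of_nat_diff)
  finally have sum_low: "(x + 2 - m) * S = (x + 1) * a"
    by (simp add: algebra_simps)
  have sum_high: "x * T = m * a"
    using row_high by (simp add: T_def sum_distrib_left)
  have "a * pendant_cubic m x = x * ((x + 2 - m) * S - (x + 1) * a)
      + (x + 2 - m) * (x * T - m * a) - x * (x + 2 - m) * (S - a + T - x * a)"
    by (simp add: pendant_cubic_def power2_eq_square algebra_simps)
  then have "a * pendant_cubic m x = 0"
    using row_0 sum_low sum_high by simp
  moreover have "a \<noteq> 0"
  proof
    assume "a = 0"
    then have "S = 0" "\<And>j. m \<le> j \<Longrightarrow> j < 2 * m \<Longrightarrow> v $ j = 0"
      using sum_low row_high x_pos by auto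
    then have "v $ j = 0" if "j < 2 * m" for j
      using \<open>a = 0\<close> row_low[of j] x_pos that unfolding a_def
      by (cases "j = 0"; cases "j < m") auto
    then show False
      using v(2,3) by simp
  qed
  ultimately show ?thesis
    by simp
qed

lemma pendant_cubic_root_imp_eigenvalue:
  assumes "m \<ge> 2" and "real m - 2 < \<mu>" and "pendant_cubic m \<mu> = 0"
  shows "eigenvalue (pendant_clique_mat m) \<mu>"
proof -
  define w where "w = vec (2 * m)
    (\<lambda>j. if j = 0 then \<mu> * (\<mu> + 2 - m) else if j < m then \<mu> else \<mu> + 2 - m)"
  have S: "(\<Sum>j = 0..<m. w $ j) = \<mu> * (\<mu> + 2 - m) + (real m - 1) * \<mu>"
    using assms(1) by (simp add: w_def sum.atLeast_Suc_lessThan of_nat_diff)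
  have T: "(\<Sum>j = m..<2 * m. w $ j) = m * (\<mu> + 2 - m)"
    by (simp add: w_def)
  have "pendant_clique_mat m *\<^sub>v w = \<mu> \<cdot>\<^sub>v w"
  proof (rule eq_vecI)
    fix j
    assume "j < dim_vec (\<mu> \<cdot>\<^sub>v w)"
    then have j: "j < 2 * m"
      by (simp add: w_def)
    show "(pendant_clique_mat m *\<^sub>v w) $ j = (\<mu> \<cdot>\<^sub>v w) $ j"
      using pendant_clique_mat_mult_vec[OF j] assms(3) j S T
      by (simp add: w_def pendant_cubic_def power2_eq_square algebra_simps)
  qed (simp add: pendant_clique_mat_def w_def)
  moreover have "w $ 1 \<noteq> 0\<^sub>v (2 * m) $ 1"
    using assms by (simp add: w_def)
  then have "w \<noteq> 0\<^sub>v (2 * m)"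
    by metis
  ultimately show ?thesis
    unfolding eigenvalue_def eigenvector_def
    by (intro exI[of _ w]) (simp add: pendant_clique_mat_def w_def)
qed

lemma lambda1_pendant_clique_mat:
  assumes "m \<ge> 2"
  shows "real m - 1 < lambda1 (pendant_clique_mat m)"
    and "lambda1 (pendant_clique_mat m) \<le> m"
proof -
  define \<rho> where "\<rho> = lambda1 (pendant_clique_mat m)"
  obtain \<mu> where \<mu>: "real m - 1 < \<mu>" "pendant_cubic m \<mu> = 0"
    using pendant_cubic_root_exists[of m] assms by auto
  then have ev: "eigenvalue (pendant_clique_mat m) \<mu>"
    using assms by (intro pendant_cubic_root_imp_eigenvalue) auto
  have "\<mu> \<le> \<rho>"
    unfolding \<rho>_def by (rule eigenvalue_le_lambda1[OF pendant_clique_mat_carrier ev])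
  then show lower: "real m - 1 < \<rho>"
    using \<mu>(1) by linarith
  have "eigenvalue (pendant_clique_mat m) \<rho>"
    unfolding \<rho>_def by (rule eigenvalue_lambda1[OF pendant_clique_mat_carrier ev])
  then have root: "pendant_cubic m \<rho> = 0"
    using assms lower by (intro eigenvalue_pendant_clique_mat_imp_root) auto
  show "\<rho> \<le> m"
  proof (rule ccontr)
    assume "\<not> \<rho> \<le> m"
    then have "pendant_cubic m \<rho> > 0"
      using assms by (intro pendant_cubic_pos) auto
    then show False
      using root by simp
  qed
qed

theorem mainTheorem9:
  fixes n :: nat
  assumes "n \<ge> 3"
  shows "lambda1 (power_graph_adj_mat (2 ^ (n - 1)) (cyc_op (2 ^ (n - 1))))
           < lambda1 (power_graph_adj_mat (2 ^ n) (gyro_op n))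
      \<and> lambda1 (power_graph_adj_mat (2 ^ n) (gyro_op n))
           \<le> lambda1 (power_graph_adj_mat (2 ^ (n - 1)) (cyc_op (2 ^ (n - 1)))) + sqrt (2 ^ (n - 1))"
proof -
  define m :: nat where "m = 2 ^ (n - 1)"
  have "(2::nat) ^ 1 \<le> 2 ^ (n - 1)"
    using assms by (intro power_increasing) auto
  then have "m \<ge> 2"
    by (simp add: m_def)
  have cyclic: "lambda1 (power_graph_adj_mat (2 ^ (n - 1)) (cyc_op (2 ^ (n - 1)))) = real m - 1"
    using power_graph_cyc_op_prime_power[OF two_is_prime_nat] lambda1_complete_graph_mat
      \<open>m \<ge> 2\<close>
    unfolding m_def by simp
  have gyro: "power_graph_adj_mat (2 ^ n) (gyro_op n) = pendant_clique_mat m"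
    using power_graph_gyro_op assms unfolding m_def by simp
  have "1 \<le> sqrt (2 ^ (n - 1) :: real)"
    by simp
  then show ?thesis
    unfolding cyclic gyro using lambda1_pendant_clique_mat[OF \<open>m \<ge> 2\<close>] by linarith
qed

end
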